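(* Let $m=2l-1$ with $l\ge1$, so $\mathfrak g$ is of type $B_l$, and write the noncompact positive roots as the chain $\gamma_1<\gamma_2<\dots<\gamma_{2l-1}$, where $\gamma_k=\phi_1+\dots+\phi_k$ for $1\le k\le l$ and $\gamma_{l+k}=\phi_1+\dots+\phi_{l-k}+2\phi_{l-k+1}+\dots+2\phi_l$ for $1\le k\le l-1$. For $0\le i\le 2l-1$ let $D_i=\{\gamma_1,\dots,\gamma_i\}$ ($D_0=\emptyset$) and for $1\le s\le 2l$ let $U_s=\{\gamma_s,\dots,\gamma_{2l-1}\}$ ($U_{2l}=\emptyset$). Then the pairs $(\Delta(\mathfrak u\cap\mathfrak p_-),\Delta(\mathfrak u\cap\mathfrak p_+))$ arising from $\theta$-stable parabolic subalgebras $\mathfrak q\supseteq\mathfrak h\oplus\sum_{\alpha\in\Delta_{\mathfrak k}^+}\mathfrak g^\alpha$ are exactly the pairs $(-D_i,U_s)$ with either (a) $0\le i\le l-1$ and $s\in\{i+1,i+2,\dots,l\}\cup\{2l-i\}$, or (b) $l\le i\le 2l-1$ and $s\in\{i+1,\dots,2l\}$. In particular there are $l(l+2)$ such pairs.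
   Context: Setting: $G=SO_0(2,m)$, $K\cong SO(2)\times SO(m)$ maximal compact, $\theta$ Cartan involution, $\mathfrak g_0=\mathfrak{so}(2,m)=\mathfrak k_0\oplus\mathfrak p_0$, complexifications $\mathfrak g,\mathfrak k,\mathfrak p$. Let $\mathfrak t_0$ be a maximal abelian subalgebra of $\mathfrak k_0$ (also a Cartan subalgebra of $\mathfrak g_0$), $\mathfrak h=\mathfrak t_0^{\mathbb C}$, $\Delta=\Delta(\mathfrak g,\mathfrak h)$, $\Delta_{\mathfrak k}$ the compact roots (roots of $\mathfrak k$), $\Delta_n=\Delta\setminus\Delta_{\mathfrak k}$. For $m=2l-1$, fix a positive system $\Delta^+$ with simple roots $\phi_1,\dots,\phi_l$ (Dynkin diagram $\phi_1-\phi_2-\cdots-\phi_{l-1}\Rightarrow\phi_l$, $\phi_l$ short) in which $\phi_1$ is the unique noncompact simple root and every noncompact root has $\phi_1$-coefficient $\pm1$; $\Delta_{\mathfrak k}^+=\Delta^+\cap\Delta_{\mathfrak k}$, $\Delta_n^+=\Delta^+\cap\Delta_n$, $\mathfrak p_\pm=\sum_{\alpha\in\pm\Delta_n^+}\mathfrak g^\alpha$. For $l=1$, $\Delta=\{\pm\phi_1\}$ with $\phi_1$ noncompact. A $\theta$-stable parabolic subalgebra is a parabolic subalgebra $\mathfrak q$ of $\mathfrak g$ with $\theta(\mathfrak q)=\mathfrak q$ and $\mathfrak q\cap\bar{\mathfrak q}$ a Levi subalgebra; $\mathfrak u$ denotes its nilradical, and $\Delta(\mathfrak u\cap\mathfrak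 p_\pm)=\{\alpha\in\pm\Delta_n^+:\mathfrak g^\alpha\subseteq\mathfrak u\}$. *)

theory Defs
  imports Main
begin

(* Root system of g = so(2,2l-1)^C (type B_l), realised in the weight lattice
   Z^l; a weight is a function nat => int supported on {1..l}. *)

type_synonym wt = "nat \<Rightarrow> int"

definition ev :: "nat \<Rightarrow> wt" where
  "ev i = (\<lambda>k. if k = i then 1 else 0)"

definition wadd :: "wt \<Rightarrow> wt \<Rightarrow> wt" where
  "wadd a b = (\<lambda>k. a k + b k)"

definition wneg :: "wt \<Rightarrow> wt" where
  "wneg a = (\<lambda>k. - a k)"

definition wsmul :: "int \<Rightarrow> wt \<Rightarrow> wt" where
  "wsmul c a = (\<lambda>k. c * a k)"

definition roots :: "nat \<Rightarrow> wt set" where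
  "roots l =
     {wadd (wsmul s (ev i)) (wsmul t (ev j)) | i j s t.
        1 \<le> i \<and> i < j \<and> j \<le> l \<and> s \<in> {1, -1} \<and> t \<in> {1, -1}}
   \<union> {wsmul s (ev i) | i s. 1 \<le> i \<and> i \<le> l \<and> s \<in> {1, -1}}"

definition phi :: "nat \<Rightarrow> nat \<Rightarrow> wt" where
  "phi l i = (if i < l then wadd (ev i) (wneg (ev (Suc i))) else ev l)"

definition lincomb :: "nat \<Rightarrow> (nat \<Rightarrow> int) \<Rightarrow> wt" where
  "lincomb l c = (\<lambda>k. \<Sum>i=1..l. c i * phi l i k)"

definition pos_roots :: "nat \<Rightarrow> wt set" where
  "pos_roots l = {a \<in> roots l. \<exists>c::nat \<Rightarrow> nat. a = lincomb l (\<lambda>i. int (c i))}"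

(* compact roots: phi_1-coefficient 0 (the phi_1-coefficient of a root a is a 1);
   noncompact roots: the others (phi_1 is the unique noncompact simple root). *)
definition cpt_roots :: "nat \<Rightarrow> wt set" where
  "cpt_roots l = {a \<in> roots l. a 1 = 0}"

definition ncpt_roots :: "nat \<Rightarrow> wt set" where
  "ncpt_roots l = roots l - cpt_roots l"

definition pos_cpt_roots :: "nat \<Rightarrow> wt set" where
  "pos_cpt_roots l = pos_roots l \<inter> cpt_roots l"

definition pos_ncpt_roots :: "nat \<Rightarrow> wt set" where
  "pos_ncpt_roots l = pos_roots l \<inter> ncpt_roots l"

(* A subalgebra q = h + sum_{a in P} g^a is a parabolic subalgebra iff the set P of
   roots is closed and P \<union> -P = Delta.  Since h = t_0^C is contained in k, every
   such q is theta-stable, and q \<inter> conj q = h + sum_{a in P \<inter> -P} g^a is a Levi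
   subalgebra.  So theta-stable parabolic subalgebras q containing
   h + sum_{a in Delta_k^+} g^a correspond to the following sets P. *)
definition theta_parabolic :: "nat \<Rightarrow> wt set \<Rightarrow> bool" where
  "theta_parabolic l P \<longleftrightarrow>
     P \<subseteq> roots l \<and>
     (\<forall>a\<in>P. \<forall>b\<in>P. wadd a b \<in> roots l \<longrightarrow> wadd a b \<in> P) \<and>
     P \<union> wneg ` P = roots l \<and>
     pos_cpt_roots l \<subseteq> P"

definition nil_roots :: "nat \<Rightarrow> wt set \<Rightarrow> wt set" where
  "nil_roots l P = {a \<in> P. wneg a \<notin> P}"

definition u_plus :: "nat \<Rightarrow> wt set \<Rightarrow> wt set" where
  "u_plus l P = nil_roots l P \<inter> pos_ncpt_roots l"

definition u_minus :: "nat \<Rightarrow> wt set \<Rightarrow> wt set" where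
  "u_minus l P = nil_roots l P \<inter> wneg ` pos_ncpt_roots l"

definition gamma :: "nat \<Rightarrow> nat \<Rightarrow> wt" where
  "gamma l k = lincomb l (\<lambda>i. if k \<le> l then (if i \<le> k then 1 else 0)
                                 else (if i \<le> 2*l - k then 1 else 2))"

definition Dset :: "nat \<Rightarrow> nat \<Rightarrow> wt set" where
  "Dset l i = gamma l ` {1..i}"

definition Uset :: "nat \<Rightarrow> nat \<Rightarrow> wt set" where
  "Uset l s = gamma l ` {s..2*l-1}"

end

theory Submission
  imports Defs
begin

(* The positive noncompact roots form the chain gamma_1 < ... < gamma_(2l-1), and consecutive
   members differ by a compact simple root.  A theta-stable parabolic q containing the positive
   compact root spaces is closed under addition, so {k. gamma_k in q} is a final segment (i, 2l-1]
   and {k. -gamma_k in q} an initial segment [1, j]; they cover [1, 2l-1], hence i <= j and the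
   nilradical meets p_- in -D_i and p_+ in U_(j+1).  If both gamma_l = e_1 and -gamma_l lie in q,
   adding them to the compact roots +-e_(k+1) shows that gamma_k is in q iff -gamma_(2l-k) is,
   which forces j + 1 = 2l - i.  Conversely each admissible pair comes from the parabolic
   {a. <lam, a> >= 0} of a weight lam that is dominant for the compact roots and is chosen so
   that <lam, gamma_k> changes sign exactly at i and at s. *)

lemmas weight_defs = ev_def wadd_def wneg_def wsmul_def

lemma wneg_wneg [simp]: "wneg (wneg a) = a"
  by (simp add: weight_defs)

lemma wneg_wadd: "wneg (wadd a b) = wadd (wneg a) (wneg b)"
  by (simp add: weight_defs)

lemma wneg_wsmul: "wneg (wsmul c a) = wsmul (- c) a"
  by (simp add: weight_defs)

lemma wsmul_one [simp]: "wsmul 1 a = a"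
  by (simp add: weight_defs)

lemma wsmul_minus_one [simp]: "wsmul (- 1) a = wneg a"
  by (simp add: weight_defs)

lemma wneg_eq_wadd_wneg: "c = wadd a p \<Longrightarrow> wneg a = wadd (wneg c) p"
  by (simp add: weight_defs)

definition wdot :: "nat \<Rightarrow> wt \<Rightarrow> wt \<Rightarrow> int" where
  "wdot l lam a = (\<Sum>x=1..l. lam x * a x)"

lemma wdot_wadd: "wdot l lam (wadd a b) = wdot l lam a + wdot l lam b"
  by (simp add: wdot_def wadd_def distrib_left sum.distrib)

lemma wdot_wneg: "wdot l lam (wneg a) = - wdot l lam a"
  by (simp add: wdot_def wneg_def sum_negf)

lemma wdot_ev: "1 \<le> i \<Longrightarrow> i \<le> l \<Longrightarrow> wdot l lam (ev i) = lam i"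
  by (simp add: wdot_def ev_def if_distrib[where f="\<lambda>v. _ * v"] cong: if_cong)

lemma roots_memI:
  "\<lbrakk>1 \<le> i; i < j; j \<le> l; s \<in> {1, -1}; t \<in> {1, -1}\<rbrakk>
     \<Longrightarrow> wadd (wsmul s (ev i)) (wsmul t (ev j)) \<in> roots l"
  "\<lbrakk>1 \<le> i; i \<le> l; s \<in> {1, -1}\<rbrakk> \<Longrightarrow> wsmul s (ev i) \<in> roots l"
  unfolding roots_def by blast+

lemma rootsE:
  assumes "a \<in> roots l"
  obtains (long) i j s t where "1 \<le> i" "i < j" "j \<le> l" "s \<in> {1, -1}" "t \<in> {1, -1}"
      "a = wadd (wsmul s (ev i)) (wsmul t (ev j))"
  | (short) i s where "1 \<le> i" "i \<le> l" "s \<in> {1, -1}" "a = wsmul s (ev i)"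
  using assms unfolding roots_def by blast

lemma wneg_roots: "a \<in> roots l \<Longrightarrow> wneg a \<in> roots l"
  by (erule rootsE) (auto simp: wneg_wadd wneg_wsmul intro!: roots_memI)

lemma lincomb_apply:
  "lincomb l c x = (if 1 \<le> x \<and> x \<le> l then c x - (if 2 \<le> x then c (x - 1) else 0) else 0)"
proof -
  have "lincomb l c x = (\<Sum>i=1..l. if x = i then c i else 0)
      - (\<Sum>i=1..l. if 2 \<le> x \<and> x \<le> l then (if x - 1 = i then c i else 0) else 0)"
    unfolding lincomb_def sum_subtractf[symmetric]
    by (rule sum.cong) (auto simp: phi_def weight_defs)
  also have "(\<Sum>i=1..l. if 2 \<le> x \<and> x \<le> l then (if x - 1 = i then c i else 0) else 0)
      = (if 2 \<le> x \<and> x \<le> l then c (x - 1) else 0)"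
    by (cases "2 \<le> x \<and> x \<le> l") auto
  finally show ?thesis by auto
qed

lemma wdot_lincomb: "wdot l lam (lincomb l c) = (\<Sum>i=1..l. c i * wdot l lam (phi l i))"
  unfolding wdot_def lincomb_def by (simp add: sum_distrib_left algebra_simps) (rule sum.swap)

lemma wdot_phi:
  "1 \<le> i \<Longrightarrow> i \<le> l \<Longrightarrow> wdot l lam (phi l i) = (if i < l then lam i - lam (i + 1) else lam l)"
  by (simp add: phi_def wdot_wadd wdot_wneg wdot_ev)

lemma phi_in_pos_cpt_roots:
  assumes "2 \<le> j" "j \<le> l"
  shows "phi l j \<in> pos_cpt_roots l"
proof -
  have "phi l j \<in> roots l"
  proof (cases "j < l")
    case True
    then show ?thesis
      using roots_memI(1)[of j "j + 1" l 1 "- 1"] assms by (simp add: phi_def)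
  next
    case False
    then show ?thesis
      using roots_memI(2)[of j l 1] assms by (simp add: phi_def)
  qed
  moreover have "\<exists>c :: nat \<Rightarrow> nat. phi l j = lincomb l (\<lambda>i. int (c i))"
    using assms by (intro exI[of _ "\<lambda>i. if i = j then 1 else 0"] ext)
      (auto simp: lincomb_apply phi_def weight_defs)
  moreover have "phi l j 1 = 0"
    using assms by (simp add: phi_def weight_defs)
  ultimately show ?thesis
    unfolding pos_cpt_roots_def pos_roots_def cpt_roots_def by blast
qed

section \<open>The noncompact positive roots\<close>

lemma gamma_eq_ev:
  assumes "1 \<le> k" "k \<le> 2 * l - 1"
  shows "gamma l k = (if k < l then wadd (ev 1) (wneg (ev (k + 1)))
                      else if k = l then ev 1 else wadd (ev 1) (ev (2 * l - k + 1)))"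
  using assms by (intro ext) (auto simp: gamma_def lincomb_apply weight_defs)

lemma gamma_apply_1: "1 \<le> k \<Longrightarrow> k \<le> 2 * l - 1 \<Longrightarrow> gamma l k 1 = 1"
  by (simp add: gamma_eq_ev weight_defs)

lemma gamma_in_roots:
  assumes "1 \<le> k" "k \<le> 2 * l - 1"
  shows "gamma l k \<in> roots l"
  using assms roots_memI(1)[of 1 "k + 1" l 1 "- 1"] roots_memI(2)[of 1 l 1]
    roots_memI(1)[of 1 "2 * l - k + 1" l 1 1]
  by (auto simp: gamma_eq_ev)

lemma gamma_in_pos_roots:
  assumes "1 \<le> k" "k \<le> 2 * l - 1"
  shows "gamma l k \<in> pos_roots l"
proof -
  define c :: "nat \<Rightarrow> nat" where
    "c i = (if k \<le> l then (if i \<le> k then 1 else 0) else (if i \<le> 2 * l - k then 1 else 2))" for i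
  have "gamma l k = lincomb l (\<lambda>i. int (c i))"
    unfolding gamma_def c_def by (rule arg_cong[where f="lincomb l"]) auto
  then show ?thesis
    using gamma_in_roots[OF assms] unfolding pos_roots_def by blast
qed

lemma wdot_gamma:
  assumes "1 \<le> k" "k \<le> 2 * l - 1"
  shows "wdot l lam (gamma l k) = (if k < l then lam 1 - lam (k + 1) else if k = l then lam 1
                                   else lam 1 + lam (2 * l - k + 1))"
  using assms by (auto simp: gamma_eq_ev wdot_wadd wdot_wneg wdot_ev)

lemma inj_on_gamma: "inj_on (gamma l) {1..2 * l - 1}"
proof
  fix a b assume a: "a \<in> {1..2 * l - 1}" and b: "b \<in> {1..2 * l - 1}"
    and eq: "gamma l a = gamma l b"
  define height :: wt where "height x = (if x = 1 then 0 else int l + 1 - int x)" for x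
  have "wdot l height (gamma l k) = int k - int l" if "k \<in> {1..2 * l - 1}" for k
    using that by (auto simp: wdot_gamma height_def of_nat_diff)
  then show "a = b"
    using a b arg_cong[OF eq, of "wdot l height"] by simp
qed

lemma roots_first_coord_pos:
  assumes "a \<in> roots l" "0 < a 1"
  shows "a \<in> gamma l ` {1..2 * l - 1}"
  using assms(1)
proof (cases rule: rootsE)
  case (long i j s t)
  then have "i = 1" "s = 1"
    using assms(2) by (auto simp: weight_defs split: if_splits)
  show ?thesis
  proof (cases "t = 1")
    case True
    have "l < 2 * l - j + 1" "2 * l - (2 * l - j + 1) + 1 = j"
      using long by auto
    with True have "a = gamma l (2 * l - j + 1)"
      using long \<open>i = 1\<close> \<open>s = 1\<close> by (simp add: gamma_eq_ev)
    then show ?thesis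
      using long by (auto intro!: imageI)
  next
    case False
    then have "a = gamma l (j - 1)"
      using long \<open>i = 1\<close> \<open>s = 1\<close> by (auto simp: gamma_eq_ev)
    then show ?thesis
      using long \<open>i = 1\<close> by (auto intro!: imageI)
  qed
next
  case (short i s)
  then have "a = gamma l l"
    using assms(2) by (auto simp: gamma_eq_ev weight_defs split: if_splits)
  then show ?thesis
    using short by (auto intro!: imageI)
qed

lemma pos_ncpt_roots_eq:
  assumes "1 \<le> l"
  shows "pos_ncpt_roots l = gamma l ` {1..2 * l - 1}"
proof
  show "gamma l ` {1..2 * l - 1} \<subseteq> pos_ncpt_roots l"
    using gamma_in_roots gamma_in_pos_roots gamma_apply_1
    by (auto simp: pos_ncpt_roots_def ncpt_roots_def cpt_roots_def)
next
  show "pos_ncpt_roots l \<subseteq> gamma l ` {1..2 * l - 1}"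
  proof
    fix a assume "a \<in> pos_ncpt_roots l"
    then obtain c :: "nat \<Rightarrow> nat" where "a \<in> roots l" "a 1 \<noteq> 0"
      and "a = lincomb l (\<lambda>i. int (c i))"
      by (auto simp: pos_ncpt_roots_def ncpt_roots_def cpt_roots_def pos_roots_def)
    moreover from this have "0 \<le> a 1"
      using assms by (simp add: lincomb_apply)
    ultimately show "a \<in> gamma l ` {1..2 * l - 1}"
      using roots_first_coord_pos by simp
  qed
qed

definition nilradical_pairs :: "nat \<Rightarrow> (wt set \<times> wt set) set" where
  "nilradical_pairs l = {(u_minus l P, u_plus l P) | P. theta_parabolic l P}"

definition admissible :: "nat \<Rightarrow> nat \<Rightarrow> nat \<Rightarrow> bool" where
  "admissible l i s \<longleftrightarrow>
     (i \<le> l - 1 \<and> s \<in> {i+1..l} \<union> {2*l - i}) \<or> (l \<le> i \<and> i \<le> 2*l - 1 \<and> s \<in> {i+1..2*l})"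

lemma u_plus_eq_Uset:
  assumes "1 \<le> l" "1 \<le> s"
    and "\<And>k. 1 \<le> k \<Longrightarrow> k \<le> 2 * l - 1 \<Longrightarrow> gamma l k \<in> P \<and> wneg (gamma l k) \<notin> P \<longleftrightarrow> s \<le> k"
  shows "u_plus l P = Uset l s"
proof -
  have "u_plus l P = gamma l ` {k \<in> {1..2 * l - 1}. gamma l k \<in> P \<and> wneg (gamma l k) \<notin> P}"
    by (auto simp: u_plus_def nil_roots_def pos_ncpt_roots_eq[OF assms(1)])
  also have "{k \<in> {1..2 * l - 1}. gamma l k \<in> P \<and> wneg (gamma l k) \<notin> P} = {s..2 * l - 1}"
  proof (intro set_eqI)
    fix k
    show "k \<in> {k \<in> {1..2 * l - 1}. gamma l k \<in> P \<and> wneg (gamma l k) \<notin> P} \<longleftrightarrow> k \<in> {s..2 * l - 1}"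
      using assms(2) assms(3)[of k] by (cases "1 \<le> k \<and> k \<le> 2 * l - 1") auto
  qed
  finally show ?thesis
    unfolding Uset_def .
qed

lemma u_minus_eq_wneg_Dset:
  assumes "1 \<le> l" "i \<le> 2 * l - 1"
    and "\<And>k. 1 \<le> k \<Longrightarrow> k \<le> 2 * l - 1 \<Longrightarrow> wneg (gamma l k) \<in> P \<and> gamma l k \<notin> P \<longleftrightarrow> k \<le> i"
  shows "u_minus l P = wneg ` Dset l i"
proof -
  have "u_minus l P = wneg ` gamma l ` {k \<in> {1..2 * l - 1}. wneg (gamma l k) \<in> P \<and> gamma l k \<notin> P}"
    by (auto simp: u_minus_def nil_roots_def pos_ncpt_roots_eq[OF assms(1)])
  also have "{k \<in> {1..2 * l - 1}. wneg (gamma l k) \<in> P \<and> gamma l k \<notin> P} = {1..i}"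
  proof (intro set_eqI)
    fix k
    show "k \<in> {k \<in> {1..2 * l - 1}. wneg (gamma l k) \<in> P \<and> gamma l k \<notin> P} \<longleftrightarrow> k \<in> {1..i}"
      using assms(2) assms(3)[of k] by (cases "1 \<le> k \<and> k \<le> 2 * l - 1") auto
  qed
  finally show ?thesis
    unfolding Dset_def .
qed

section \<open>Parabolic subalgebras defined by a weight\<close>

definition parabolic_of_weight :: "nat \<Rightarrow> wt \<Rightarrow> wt set" where
  "parabolic_of_weight l lam = {a \<in> roots l. 0 \<le> wdot l lam a}"

lemma wdot_pos_cpt_roots_nonneg:
  assumes dominant: "\<And>j. 2 \<le> j \<Longrightarrow> j \<le> l \<Longrightarrow> 0 \<le> wdot l lam (phi l j)"
    and a: "a \<in> pos_cpt_roots l"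
  shows "0 \<le> wdot l lam a"
proof -
  obtain c :: "nat \<Rightarrow> nat" where c: "a = lincomb l (\<lambda>i. int (c i))" and "a 1 = 0"
    using a by (auto simp: pos_cpt_roots_def pos_roots_def cpt_roots_def)
  have "0 \<le> int (c j) * wdot l lam (phi l j)" if "j \<in> {1..l}" for j
  proof (cases "j = 1")
    case True
    with that have "c 1 = 0"
      using \<open>a 1 = 0\<close> by (simp add: c lincomb_apply)
    with True show ?thesis by simp
  next
    case False
    with that show ?thesis by (simp add: dominant)
  qed
  then show ?thesis
    unfolding c wdot_lincomb by (rule sum_nonneg)
qed

lemma theta_parabolic_parabolic_of_weight:
  assumes "\<And>j. 2 \<le> j \<Longrightarrow> j \<le> l \<Longrightarrow> 0 \<le> wdot l lam (phi l j)"
  shows "theta_parabolic l (parabolic_of_weight l lam)"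
  unfolding theta_parabolic_def
proof (intro conjI ballI impI)
  let ?P = "parabolic_of_weight l lam"
  show "?P \<subseteq> roots l"
    by (auto simp: parabolic_of_weight_def)
  show "wadd a b \<in> ?P" if "a \<in> ?P" "b \<in> ?P" "wadd a b \<in> roots l" for a b
    using that by (simp add: parabolic_of_weight_def wdot_wadd)
  have "a \<in> ?P \<union> wneg ` ?P" if "a \<in> roots l" for a
  proof -
    have "a \<in> ?P \<or> wneg a \<in> ?P"
      using that by (auto simp: parabolic_of_weight_def wdot_wneg wneg_roots)
    then show ?thesis
      by (metis UnI1 UnI2 image_eqI wneg_wneg)
  qed
  then show "?P \<union> wneg ` ?P = roots l"
    by (auto simp: parabolic_of_weight_def wneg_roots)
  show "pos_cpt_roots l \<subseteq> ?P"
    using wdot_pos_cpt_roots_nonneg[OF assms]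
    by (auto simp: parabolic_of_weight_def pos_cpt_roots_def cpt_roots_def)
qed

lemma nilradical_pairsI: "theta_parabolic l P \<Longrightarrow> (u_minus l P, u_plus l P) \<in> nilradical_pairs l"
  unfolding nilradical_pairs_def by blast

lemma parabolic_of_weight_in_nilradical_pairs:
  assumes "1 \<le> l" "1 \<le> s" "i \<le> 2 * l - 1"
    and decreasing: "\<And>j. 2 \<le> j \<Longrightarrow> j < l \<Longrightarrow> lam (j + 1) \<le> lam j"
    and nonneg: "\<And>j. 2 \<le> j \<Longrightarrow> j \<le> l \<Longrightarrow> 0 \<le> lam j"
    and pos: "\<And>k. 1 \<le> k \<Longrightarrow> k \<le> 2 * l - 1 \<Longrightarrow> 0 < wdot l lam (gamma l k) \<longleftrightarrow> s \<le> k"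
    and neg: "\<And>k. 1 \<le> k \<Longrightarrow> k \<le> 2 * l - 1 \<Longrightarrow> wdot l lam (gamma l k) < 0 \<longleftrightarrow> k \<le> i"
  shows "(wneg ` Dset l i, Uset l s) \<in> nilradical_pairs l"
proof -
  let ?P = "parabolic_of_weight l lam"
  have mem: "gamma l k \<in> ?P \<longleftrightarrow> 0 \<le> wdot l lam (gamma l k)"
    "wneg (gamma l k) \<in> ?P \<longleftrightarrow> wdot l lam (gamma l k) \<le> 0"
    if "1 \<le> k" "k \<le> 2 * l - 1" for k
    using gamma_in_roots[OF that] wneg_roots[OF gamma_in_roots[OF that]]
    by (auto simp: parabolic_of_weight_def wdot_wneg)
  have plus: "u_plus l ?P = Uset l s"
  proof (rule u_plus_eq_Uset[OF \<open>1 \<le> l\<close> \<open>1 \<le> s\<close>])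
    fix k assume k: "1 \<le> k" "k \<le> 2 * l - 1"
    show "gamma l k \<in> ?P \<and> wneg (gamma l k) \<notin> ?P \<longleftrightarrow> s \<le> k"
      using mem[OF k] pos[OF k] by auto
  qed
  have minus: "u_minus l ?P = wneg ` Dset l i"
  proof (rule u_minus_eq_wneg_Dset[OF \<open>1 \<le> l\<close> \<open>i \<le> 2 * l - 1\<close>])
    fix k assume k: "1 \<le> k" "k \<le> 2 * l - 1"
    show "wneg (gamma l k) \<in> ?P \<and> gamma l k \<notin> ?P \<longleftrightarrow> k \<le> i"
      using mem[OF k] neg[OF k] by auto
  qed
  have "theta_parabolic l ?P"
  proof (rule theta_parabolic_parabolic_of_weight)
    fix j assume "2 \<le> j" "j \<le> l"
    then show "0 \<le> wdot l lam (phi l j)"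
      using decreasing[of j] nonneg[of j] by (auto simp: wdot_phi)
  qed
  then show ?thesis
    using nilradical_pairsI[of l ?P] by (simp only: plus minus)
qed

lemma nilradical_pairs_lower:
  assumes "1 \<le> l" "i < s" "s \<le> l"
  shows "(wneg ` Dset l i, Uset l s) \<in> nilradical_pairs l"
proof -
  let ?lam = "\<lambda>x::nat. if x = 1 then 2 else if x \<le> i + 1 then 3 else if x \<le> s then 2 else 0 :: int"
  show ?thesis
  proof (rule parabolic_of_weight_in_nilradical_pairs[where lam = ?lam])
    fix k assume k: "1 \<le> k" "k \<le> 2 * l - 1"
    show "0 < wdot l ?lam (gamma l k) \<longleftrightarrow> s \<le> k" "wdot l ?lam (gamma l k) < 0 \<longleftrightarrow> k \<le> i"
      unfolding wdot_gamma[OF k] using k assms by auto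
  qed (use assms in auto)
qed

(* With lam 1 = 0 the pairing k \<mapsto> <lam, gamma_k> is odd under k \<mapsto> 2l - k. *)
lemma nilradical_pairs_reflected:
  assumes "1 \<le> l" "i < l"
  shows "(wneg ` Dset l i, Uset l (2 * l - i)) \<in> nilradical_pairs l"
proof -
  let ?lam = "\<lambda>x::nat. if x = 1 then 0 else if x \<le> i + 1 then 1 else 0 :: int"
  show ?thesis
  proof (rule parabolic_of_weight_in_nilradical_pairs[where lam = ?lam])
    fix k assume k: "1 \<le> k" "k \<le> 2 * l - 1"
    show "0 < wdot l ?lam (gamma l k) \<longleftrightarrow> 2 * l - i \<le> k" "wdot l ?lam (gamma l k) < 0 \<longleftrightarrow> k \<le> i"
      unfolding wdot_gamma[OF k] using k assms by auto
  qed (use assms in auto)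
qed

lemma nilradical_pairs_upper:
  assumes "l \<le> i" "i < s" "s \<le> 2 * l"
  shows "(wneg ` Dset l i, Uset l s) \<in> nilradical_pairs l"
proof -
  let ?lam = "\<lambda>x::nat. if x = 1 then -2 else if x \<le> 2 * l - s + 1 then 3
                       else if x \<le> 2 * l - i then 2 else 0 :: int"
  show ?thesis
  proof (rule parabolic_of_weight_in_nilradical_pairs[where lam = ?lam])
    fix k assume k: "1 \<le> k" "k \<le> 2 * l - 1"
    show "0 < wdot l ?lam (gamma l k) \<longleftrightarrow> s \<le> k" "wdot l ?lam (gamma l k) < 0 \<longleftrightarrow> k \<le> i"
      unfolding wdot_gamma[OF k] using k assms by auto
  qed (use assms in auto)
qed

lemma admissible_in_nilradical_pairs:
  assumes "1 \<le> l" "admissible l i s"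
  shows "(wneg ` Dset l i, Uset l s) \<in> nilradical_pairs l"
proof -
  consider "i < s" "s \<le> l" | "i < l" "s = 2 * l - i" | "l \<le> i" "i < s" "s \<le> 2 * l"
    using assms unfolding admissible_def by auto
  then show ?thesis
    using nilradical_pairs_lower[OF assms(1)] nilradical_pairs_reflected[OF assms(1)]
      nilradical_pairs_upper
    by cases blast+
qed

section \<open>Arbitrary theta-stable parabolic subalgebras\<close>

lemma theta_parabolic_add:
  "theta_parabolic l P \<Longrightarrow> a \<in> P \<Longrightarrow> b \<in> P \<Longrightarrow> wadd a b \<in> roots l \<Longrightarrow> wadd a b \<in> P"
  by (simp add: theta_parabolic_def)

lemma theta_parabolic_gamma_or_wneg:
  assumes "theta_parabolic l P" "1 \<le> k" "k \<le> 2 * l - 1"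
  shows "gamma l k \<in> P \<or> wneg (gamma l k) \<in> P"
proof -
  have "gamma l k \<in> P \<union> wneg ` P"
    using assms gamma_in_roots by (simp add: theta_parabolic_def)
  then show ?thesis
    by auto
qed

lemma gamma_Suc_eq:
  assumes "1 \<le> k" "k < 2 * l - 1"
  shows "gamma l (k + 1) = wadd (gamma l k) (phi l (if k < l then k + 1 else 2 * l - k))"
  using assms by (intro ext) (auto simp: gamma_eq_ev phi_def weight_defs)

lemma theta_parabolic_gamma_step:
  assumes P: "theta_parabolic l P" and k: "1 \<le> k" "k < 2 * l - 1"
  shows "gamma l k \<in> P \<Longrightarrow> gamma l (k + 1) \<in> P"
    and "wneg (gamma l (k + 1)) \<in> P \<Longrightarrow> wneg (gamma l k) \<in> P"
proof -
  define j where "j = (if k < l then k + 1 else 2 * l - k)"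
  have step: "gamma l (k + 1) = wadd (gamma l k) (phi l j)"
    using gamma_Suc_eq[OF k] by (simp add: j_def)
  have "phi l j \<in> P"
    using P phi_in_pos_cpt_roots[of j l] k by (auto simp: theta_parabolic_def j_def)
  show "gamma l (k + 1) \<in> P" if "gamma l k \<in> P"
    using theta_parabolic_add[OF P that \<open>phi l j \<in> P\<close>] step gamma_in_roots[of "k + 1" l] k
    by simp
  show "wneg (gamma l k) \<in> P" if "wneg (gamma l (k + 1)) \<in> P"
    using theta_parabolic_add[OF P that \<open>phi l j \<in> P\<close>] wneg_eq_wadd_wneg[OF step]
      wneg_roots[OF gamma_in_roots[of k l]] k
    by simp
qed

lemma theta_parabolic_gamma_reflect:
  assumes P: "theta_parabolic l P" and pl: "gamma l l \<in> P" and ml: "wneg (gamma l l) \<in> P"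
    and k: "1 \<le> k" "k < l"
  shows "gamma l k \<in> P \<longleftrightarrow> wneg (gamma l (2 * l - k)) \<in> P"
proof -
  have sums: "wadd (gamma l k) (wneg (gamma l l)) = wneg (ev (k + 1))"
    "wadd (wneg (gamma l l)) (wneg (ev (k + 1))) = wneg (gamma l (2 * l - k))"
    "wadd (wneg (gamma l (2 * l - k))) (gamma l l) = wneg (ev (k + 1))"
    "wadd (gamma l l) (wneg (ev (k + 1))) = gamma l k"
    using k by (auto intro!: ext simp: gamma_eq_ev weight_defs)
  have "wneg (ev (k + 1)) \<in> roots l"
    using roots_memI(2)[of "k + 1" l "- 1"] k by simp
  moreover have "gamma l k \<in> roots l" "wneg (gamma l (2 * l - k)) \<in> roots l"
    using k gamma_in_roots[of k l] wneg_roots[OF gamma_in_roots[of "2 * l - k" l]] by auto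
  ultimately show ?thesis
    using theta_parabolic_add[OF P] pl ml sums by metis
qed

lemma upward_closed_threshold:
  fixes p :: "nat \<Rightarrow> bool"
  assumes "\<And>k. 1 \<le> k \<Longrightarrow> k < n \<Longrightarrow> p k \<Longrightarrow> p (k + 1)"
  shows "\<exists>i\<le>n. \<forall>k\<in>{1..n}. p k \<longleftrightarrow> i < k"
  using assms
proof (induction n)
  case 0
  then show ?case by simp
next
  case (Suc n)
  then obtain i where "i \<le> n" and iff: "\<forall>k\<in>{1..n}. p k \<longleftrightarrow> i < k"
    by fastforce
  show ?case
  proof (cases "p (Suc n)")
    case True
    with iff have "\<forall>k\<in>{1..Suc n}. p k \<longleftrightarrow> i < k"
      using \<open>i \<le> n\<close> by (auto simp: le_Suc_eq)
    then show ?thesis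
      using \<open>i \<le> n\<close> le_SucI by blast
  next
    case False
    have "\<not> p k" if "k \<in> {1..n}" for k
    proof
      assume "p k"
      then have "p n"
        using iff that by auto
      then show False
        using Suc.prems[of n] False that by simp
    qed
    then have "\<forall>k\<in>{1..Suc n}. p k \<longleftrightarrow> Suc n < k"
      using False by (auto simp: le_Suc_eq)
    then show ?thesis
      by blast
  qed
qed

lemma admissible_of_thresholds:
  assumes "1 \<le> l" "i \<le> j" "j \<le> 2 * l - 1"
    and reflect: "\<And>k. i < l \<Longrightarrow> l \<le> j \<Longrightarrow> 1 \<le> k \<Longrightarrow> k < l \<Longrightarrow> i < k \<longleftrightarrow> 2 * l - k \<le> j"
  shows "admissible l i (j + 1)"
proof (cases "i < l \<and> l \<le> j")
  case True
  have "j < 2 * l - i"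
  proof (cases "i = 0")
    case True
    then show ?thesis using assms(1,3) by simp
  next
    case False
    then show ?thesis using reflect[of i] \<open>i < l \<and> l \<le> j\<close> by auto
  qed
  moreover have "2 * l - i \<le> j + 1"
  proof (cases "i + 1 < l")
    case True
    then show ?thesis using reflect[of "i + 1"] \<open>i < l \<and> l \<le> j\<close> by auto
  next
    case False
    then show ?thesis using \<open>i < l \<and> l \<le> j\<close> by auto
  qed
  ultimately show ?thesis
    using True by (auto simp: admissible_def)
next
  case False
  then show ?thesis
    using assms(1-3) by (auto simp: admissible_def)
qed

lemma theta_parabolic_nilradical_pair:
  assumes l: "1 \<le> l" and P: "theta_parabolic l P"
  obtains i s where "admissible l i s" "u_minus l P = wneg ` Dset l i" "u_plus l P = Uset l s"
proof -
  let ?n = "2 * l - 1"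
  obtain i where "i \<le> ?n" and pos: "\<And>k. k \<in> {1..?n} \<Longrightarrow> gamma l k \<in> P \<longleftrightarrow> i < k"
    using upward_closed_threshold[of ?n "\<lambda>k. gamma l k \<in> P"] theta_parabolic_gamma_step(1)[OF P]
    by blast
  obtain j where "j \<le> ?n" and neg: "\<And>k. k \<in> {1..?n} \<Longrightarrow> wneg (gamma l k) \<notin> P \<longleftrightarrow> j < k"
    using upward_closed_threshold[of ?n "\<lambda>k. wneg (gamma l k) \<notin> P"] theta_parabolic_gamma_step(2)[OF P]
    by blast
  have "i \<le> j"
  proof (rule ccontr)
    assume "\<not> i \<le> j"
    then show False
      using theta_parabolic_gamma_or_wneg[OF P, of i] pos[of i] neg[of i] \<open>i \<le> ?n\<close> by auto
  qed
  have "u_minus l P = wneg ` Dset l i"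
  proof (rule u_minus_eq_wneg_Dset[OF l \<open>i \<le> ?n\<close>])
    fix k assume "1 \<le> k" "k \<le> ?n"
    then show "wneg (gamma l k) \<in> P \<and> gamma l k \<notin> P \<longleftrightarrow> k \<le> i"
      using pos[of k] neg[of k] \<open>i \<le> j\<close> by auto
  qed
  moreover have "u_plus l P = Uset l (j + 1)"
  proof (rule u_plus_eq_Uset[OF l])
    fix k assume "1 \<le> k" "k \<le> ?n"
    then show "gamma l k \<in> P \<and> wneg (gamma l k) \<notin> P \<longleftrightarrow> j + 1 \<le> k"
      using pos[of k] neg[of k] \<open>i \<le> j\<close> by auto
  qed simp
  moreover have "admissible l i (j + 1)"
  proof (rule admissible_of_thresholds[OF l \<open>i \<le> j\<close> \<open>j \<le> ?n\<close>])
    fix k assume "i < l" "l \<le> j" and k: "1 \<le> k" "k < l"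
    then have "gamma l l \<in> P" "wneg (gamma l l) \<in> P"
      using pos[of l] neg[of l] by auto
    moreover have "k \<in> {1..?n}" "2 * l - k \<in> {1..?n}"
      using k by auto
    ultimately show "i < k \<longleftrightarrow> 2 * l - k \<le> j"
      using theta_parabolic_gamma_reflect[OF P _ _ k] pos[of k] neg[of "2 * l - k"] by auto
  qed
  ultimately show thesis
    using that by blast
qed

section \<open>Counting\<close>

lemma card_wneg_Dset:
  assumes "i \<le> 2 * l - 1"
  shows "card (wneg ` Dset l i) = i"
proof -
  have "card (wneg ` Dset l i) = card (Dset l i)"
    by (rule card_image) (metis inj_on_def wneg_wneg)
  also have "\<dots> = card {1..i}"
    unfolding Dset_def using assms by (intro card_image inj_on_subset[OF inj_on_gamma]) auto
  finally show ?thesis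
    by simp
qed

lemma card_Uset: "1 \<le> s \<Longrightarrow> card (Uset l s) = 2 * l - s"
  unfolding Uset_def by (subst card_image) (auto intro: inj_on_subset[OF inj_on_gamma])

lemma inj_on_admissible:
  assumes "1 \<le> l"
  shows "inj_on (\<lambda>(i, s). (wneg ` Dset l i, Uset l s)) {(i, s). admissible l i s}"
proof (rule inj_onI, clarsimp)
  fix i s i' s'
  assume adm: "admissible l i s" "admissible l i' s'"
    and eq: "wneg ` Dset l i = wneg ` Dset l i'" "Uset l s = Uset l s'"
  have bounds: "i \<le> 2 * l - 1" "i' \<le> 2 * l - 1" "1 \<le> s" "1 \<le> s'" "s \<le> 2 * l" "s' \<le> 2 * l"
    using adm assms by (auto simp: admissible_def)
  have "i = i'"
    using arg_cong[OF eq(1), of card] card_wneg_Dset bounds by simp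
  moreover have "s = s'"
    using arg_cong[OF eq(2), of card] card_Uset bounds by simp
  ultimately show "i = i' \<and> s = s'" ..
qed

lemma card_admissible:
  assumes "1 \<le> l"
  shows "card {(i, s). admissible l i s} = l * (l + 2)"
proof -
  define S where "S i = (if i < l then insert (2 * l - i) {i + 1..l} else {i + 1..2 * l})" for i
  define f where "f i = (if i < l then l - i + 1 else 2 * l - i)" for i
  have "{(i, s). admissible l i s} = Sigma {..<2 * l} S"
    using assms by (auto simp: admissible_def S_def split: if_splits)
  moreover have "card (S i) = f i" for i
  proof (cases "i < l")
    case True
    then have "2 * l - i \<notin> {i + 1..l}"
      by auto
    with True show ?thesis
      by (simp add: S_def f_def)
  qed (simp add: S_def f_def)
  ultimately have "card {(i, s). admissible l i s} = sum f {..<2 * l}"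
    by (simp add: S_def)
  \<comment> \<open>rows i and 2l-1-i of the admissible pairs together contain l+2 pairs\<close>
  moreover have "2 * sum f {..<2 * l} = (\<Sum>i<2 * l. f i + f (2 * l - Suc i))"
    using sum.nat_diff_reindex[of f "2 * l"] by (simp add: sum.distrib)
  moreover have "\<dots> = (\<Sum>i<2 * l. l + 2)"
    by (rule sum.cong) (auto simp: f_def)
  ultimately show ?thesis
    by simp
qed

theorem mainTheorem2:
  fixes l :: nat
  assumes "1 \<le> l"
  shows "{(u_minus l P, u_plus l P) | P. theta_parabolic l P} =
           {(wneg ` Dset l i, Uset l s) | i s.
              (i \<le> l - 1 \<and> s \<in> {i+1..l} \<union> {2*l - i}) \<or>
              (l \<le> i \<and> i \<le> 2*l - 1 \<and> s \<in> {i+1..2*l})}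
         \<and> card {(u_minus l P, u_plus l P) | P. theta_parabolic l P} = l * (l + 2)"
proof -
  let ?pair = "\<lambda>(i, s). (wneg ` Dset l i, Uset l s)"
  have pairs: "{(wneg ` Dset l i, Uset l s) | i s.
              (i \<le> l - 1 \<and> s \<in> {i+1..l} \<union> {2*l - i}) \<or>
              (l \<le> i \<and> i \<le> 2*l - 1 \<and> s \<in> {i+1..2*l})} = ?pair ` {(i, s). admissible l i s}"
    unfolding admissible_def by auto
  have "nilradical_pairs l = ?pair ` {(i, s). admissible l i s}"
  proof
    show "nilradical_pairs l \<subseteq> ?pair ` {(i, s). admissible l i s}"
    proof
      fix x assume "x \<in> nilradical_pairs l"
      then obtain P where "theta_parabolic l P" "x = (u_minus l P, u_plus l P)"
        by (auto simp: nilradical_pairs_def)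
      then show "x \<in> ?pair ` {(i, s). admissible l i s}"
        by (elim theta_parabolic_nilradical_pair[OF assms]) force
    qed
    show "?pair ` {(i, s). admissible l i s} \<subseteq> nilradical_pairs l"
      using admissible_in_nilradical_pairs[OF assms] by auto
  qed
  moreover have "card (?pair ` {(i, s). admissible l i s}) = l * (l + 2)"
    using card_image[OF inj_on_admissible[OF assms]] card_admissible[OF assms] by simp
  ultimately show ?thesis
    unfolding nilradical_pairs_def pairs by simp
qed

end
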